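(* Let $f:\mathbb{S}^1\to\mathbb{S}^1$ be an orientation-preserving homeomorphism with irrational Poincaré rotation number whose non-wandering set $\mathrm{NW}(f)$ is homeomorphic to a Cantor set. Then $h_{\mathrm{pol}}(C(f))\ge 2$.
   Context: A point $p$ is wandering for $f$ if it has a neighbourhood $U$ with $f^n(U)\cap U=\emptyset$ for all $n\ge1$; $\mathrm{NW}(f)$ is the set of points that are not wandering. $C(\mathbb{S}^1)$ is the set of all nonempty closed connected subsets of $\mathbb{S}^1$ with the Hausdorff metric $d_H(A,B)=\inf\{\varepsilon>0: A\subset U(B,\varepsilon),\ B\subset U(A,\varepsilon)\}$, $U(A,\varepsilon)=\{x: d(x,A)<\varepsilon\}$; $C(f)(A)=f(A)$. For a continuous map $g:Z\to Z$ of a compact metric space $(Z,\rho)$, define $\rho^g_n(x,y)=\max_{0\le k\le n-1}\rho(g^k(x),g^k(y))$; a finite set $E\subset Z$ is $(n,\varepsilon)$-separated if $\rho^g_n(x,y)\ge\varepsilon$ for all distinct $x,y\in E$; $\mathrm{sep}(n,\varepsilon)$ is the maximal cardinality of such a set; and $h_{\mathrm{pol}}(g)=\lim_{\varepsilon\to0}\limsup_{n\to\infty}\frac{\log \mathrm{sep}(n,\varepsilon)}{\log n}$. *)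

theory Defs
  imports "HOL-Analysis.Analysis"
begin

definition S1 :: "complex set" where
  "S1 = sphere 0 1"

text \<open>Lift of a circle map, via the covering map t to cis (2 pi t).
  An orientation-preserving homeomorphism is one admitting a continuous, strictly
  increasing lift F with F(x+1) = F(x)+1.\<close>
definition poincare_lift :: "(complex \<Rightarrow> complex) \<Rightarrow> (real \<Rightarrow> real) \<Rightarrow> bool" where
  "poincare_lift f F \<longleftrightarrow> continuous_on UNIV F \<and> strict_mono F \<and>
     (\<forall>x. F (x + 1) = F x + 1) \<and> (\<forall>x. f (cis (2 * pi * x)) = cis (2 * pi * F x))"

definition orientation_preserving :: "(complex \<Rightarrow> complex) \<Rightarrow> bool" where
  "orientation_preserving f \<longleftrightarrow> (\<exists>F. poincare_lift f F)"

definition rotation_number :: "(complex \<Rightarrow> complex) \<Rightarrow> real" where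
  "rotation_number f = frac (lim (\<lambda>n. (((SOME F. poincare_lift f F) ^^ n) 0) / real n))"

definition nonwandering :: "'a::topological_space set \<Rightarrow> ('a \<Rightarrow> 'a) \<Rightarrow> 'a set" where
  "nonwandering S f = {p \<in> S. \<forall>U. openin (top_of_set S) U \<and> p \<in> U \<longrightarrow>
       (\<exists>n\<ge>1. (f ^^ n) ` U \<inter> U \<noteq> {})}"

definition cantor_set :: "real set" where
  "cantor_set = {x. \<exists>d::nat \<Rightarrow> nat. (\<forall>n. d n \<in> {0, 2}) \<and>
                     x = (\<Sum>n. real (d n) / 3 ^ Suc n)}"

definition nbhd :: "'a::metric_space set \<Rightarrow> real \<Rightarrow> 'a set" where
  "nbhd A e = {x. infdist x A < e}"

definition hausdorff_dist :: "'a::metric_space set \<Rightarrow> 'a set \<Rightarrow> real" where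
  "hausdorff_dist A B = Inf {e. e > 0 \<and> A \<subseteq> nbhd B e \<and> B \<subseteq> nbhd A e}"

definition CS1 :: "complex set set" where
  "CS1 = {A. A \<subseteq> S1 \<and> A \<noteq> {} \<and> closed A \<and> connected A}"

definition Cmap :: "(complex \<Rightarrow> complex) \<Rightarrow> complex set \<Rightarrow> complex set" where
  "Cmap f A = f ` A"

definition dyn_dist :: "('a \<Rightarrow> 'a \<Rightarrow> real) \<Rightarrow> ('a \<Rightarrow> 'a) \<Rightarrow> nat \<Rightarrow> 'a \<Rightarrow> 'a \<Rightarrow> real" where
  "dyn_dist \<rho> g n x y = Max (insert 0 ((\<lambda>k. \<rho> ((g ^^ k) x) ((g ^^ k) y)) ` {..<n}))"

definition separated_set ::
  "'a set \<Rightarrow> ('a \<Rightarrow> 'a \<Rightarrow> real) \<Rightarrow> ('a \<Rightarrow> 'a) \<Rightarrow> nat \<Rightarrow> real \<Rightarrow> 'a set \<Rightarrow> bool" where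
  "separated_set Z \<rho> g n e E \<longleftrightarrow> finite E \<and> E \<subseteq> Z \<and>
     (\<forall>x\<in>E. \<forall>y\<in>E. x \<noteq> y \<longrightarrow> dyn_dist \<rho> g n x y \<ge> e)"

definition sep_num :: "'a set \<Rightarrow> ('a \<Rightarrow> 'a \<Rightarrow> real) \<Rightarrow> ('a \<Rightarrow> 'a) \<Rightarrow> nat \<Rightarrow> real \<Rightarrow> nat" where
  "sep_num Z \<rho> g n e = Sup (card ` {E. separated_set Z \<rho> g n e E})"

definition h_pol :: "'a set \<Rightarrow> ('a \<Rightarrow> 'a \<Rightarrow> real) \<Rightarrow> ('a \<Rightarrow> 'a) \<Rightarrow> ereal" where
  "h_pol Z \<rho> g = Lim (at_right 0)
     (\<lambda>e. limsup (\<lambda>n. ereal (ln (real (sep_num Z \<rho> g n e)) / ln (real n))))"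

end

theory Submission
  imports Defs "HOL-Real_Asymp.Real_Asymp"
begin

text \<open>A Cantor set is disconnected, so NW(f) is not the whole circle and there is a wandering point p,
  with a neighbourhood U disjoint from all its forward images. With g the inverse of f, the map f^l sends
  the backward orbit point y_l = g^l p to p and every other y_i outside U, hence at distance at least some
  r > 0 from p. Among y_0, ..., y_(n-1) there are n choose 2 arcs joining two of them. For two different
  arcs some endpoint y_l lies in one but not in the other; at time l the image of the first contains p,
  while the image of the second is an arc avoiding p whose endpoints are r-far from p, so it is r-far
  from p as a whole. The arcs are therefore (n, r)-separated for C(f), whence sep(n, r) >= n(n-1)/2 and
  h_pol(C(f)) >= 2.\<close>

section \<open>Geometry of the circle\<close>

lemma norm_cis_diff_squared: "(cmod (cis a - cis b))\<^sup>2 = 2 - 2 * cos (a - b)"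
proof -
  have "(cmod (cis a - cis b))\<^sup>2 = (cos a - cos b)\<^sup>2 + (sin a - sin b)\<^sup>2"
    by (simp add: cmod_power2)
  also have "\<dots> = (sin a ^2 + cos a ^2) + (sin b^2 + cos b^2) - 2 * (cos a * cos b + sin a * sin b)"
    by (simp add: power2_eq_square algebra_simps)
  also have "\<dots> = 2 - 2 * cos (a - b)"
    by (simp add: cos_diff)
  finally show ?thesis .
qed

lemma cos_le_max_cos_endpoints:
  fixes u1 u u2 :: real
  assumes "0 \<le> u1" "u1 \<le> u" "u \<le> u2" "u2 \<le> 1"
  shows "cos (2 * pi * u) \<le> max (cos (2 * pi * u1)) (cos (2 * pi * u2))"
proof (cases "u \<le> 1/2")
  case True
  then have "cos (2 * pi * u) \<le> cos (2 * pi * u1)"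
    by (intro cos_monotone_0_pi_le) (use assms in auto)
  then show ?thesis by auto
next
  case False
  then have "cos (2 * pi * (1-u)) \<le> cos (2 * pi * (1-u2))"
    by (intro cos_monotone_0_pi_le) (use assms in \<open>auto simp: algebra_simps\<close>)
  moreover have "cos (2 * pi * (1-w)) = cos (2 * pi * w)" for w
    by (simp add: right_diff_distrib cos_diff)
  ultimately show ?thesis by auto
qed

lemma dist_cis_ge_min_endpoints:
  fixes a u1 u u2 :: real
  assumes "a \<le> u1" "u1 \<le> u" "u \<le> u2" "u2 \<le> a + 1"
  shows "min (dist (cis (2 * pi * a)) (cis (2 * pi * u1))) (dist (cis (2 * pi * a)) (cis (2 * pi * u2)))
           \<le> dist (cis (2 * pi * a)) (cis (2 * pi * u))"
proof -
  define D where "D w = dist (cis (2 * pi * a)) (cis (2 * pi * w))" for w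
  have sq: "(D w)\<^sup>2 = 2 - 2 * cos (2 * pi * (w - a))" for w
  proof -
    have "cos (2 * pi * a - 2 * pi * w) = cos (2 * pi * (w - a))"
      by (metis cos_minus minus_diff_eq right_diff_distrib)
    then show ?thesis
      by (simp add: D_def dist_norm norm_cis_diff_squared)
  qed
  have le: "D w \<le> D u" if "cos (2 * pi * (u - a)) \<le> cos (2 * pi * (w - a))" for w
  proof (rule power2_le_imp_le)
    show "(D w)\<^sup>2 \<le> (D u)\<^sup>2"
      using that by (simp add: sq)
  qed (simp add: D_def)
  have "cos (2 * pi * (u - a)) \<le> max (cos (2 * pi * (u1 - a))) (cos (2 * pi * (u2 - a)))"
    by (rule cos_le_max_cos_endpoints) (use assms in auto)
  then have "D u1 \<le> D u \<or> D u2 \<le> D u"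
    using le by (metis max_def)
  then show ?thesis
    unfolding D_def by linarith
qed

lemma S1_cis_param:
  assumes "z \<in> S1"
  obtains s where "s \<in> {0..<1}" "z = cis (2 * pi * s)"
proof
  have "z = of_real (norm z) * exp (\<i> * of_real (Arg2pi z))"
    using Arg2pi[of z] by (simp add: is_Arg_def)
  also have "norm z = 1"
    using assms by (simp add: S1_def)
  finally show "z = cis (2 * pi * (Arg2pi z / (2 * pi)))"
    by (simp add: cis_conv_exp)
  show "Arg2pi z / (2 * pi) \<in> {0..<1}"
    using Arg2pi[of z] by auto
qed

lemma poincare_lift_funpow:
  assumes "poincare_lift f F"
  shows "poincare_lift (f ^^ n) (F ^^ n)"
proof (induction n)
  case 0
  then show ?case by (simp add: poincare_lift_def strict_mono_def)
next
  case (Suc n)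
  then show ?case
    using assms unfolding poincare_lift_def
    by (auto simp: strict_mono_def intro: continuous_on_compose2[where t=UNIV])
qed

lemma poincare_lift_diff_1:
  assumes "poincare_lift h H"
  shows "H (x - 1) = H x - 1"
  using assms unfolding poincare_lift_def by (metis eq_diff_eq)

lemma dist_lift_image_arc_ge:
  assumes H: "poincare_lift h H"
    and s: "a \<le> s" "s \<le> b"
    and x: "x \<notin> {a..b}" "b \<le> x + 1" "x \<le> a + 1"
  shows "min (dist (h (cis (2 * pi * x))) (h (cis (2 * pi * a))))
             (dist (h (cis (2 * pi * x))) (h (cis (2 * pi * b))))
           \<le> dist (h (cis (2 * pi * x))) (h (cis (2 * pi * s)))"
proof -
  have lift: "h (cis (2 * pi * y)) = cis (2 * pi * H y)" for y
    using H by (simp add: poincare_lift_def)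
  have mono: "H u \<le> H w" if "u \<le> w" for u w
    using H that by (simp add: poincare_lift_def strict_mono_less_eq)
  \<comment> \<open>Move x down by a full turn if needed, so that [a, b] lies within one turn above it.\<close>
  define x' where "x' = (if x < a then x else x - 1)"
  have x': "x' \<le> a" "b \<le> x' + 1"
    using x s unfolding x'_def by auto
  have "cis (2 * pi * H x') = cis (2 * pi * H x)"
  proof (cases "x < a")
    case False
    then have "cis (2 * pi * H x') = cis (2 * pi * H x - 2 * pi)"
      using poincare_lift_diff_1[OF H, of x] by (simp add: x'_def right_diff_distrib)
    then show ?thesis
      by (simp flip: cis_divide)
  qed (simp add: x'_def)
  moreover have "H x' \<le> H a" "H a \<le> H s" "H s \<le> H b" "H b \<le> H x' + 1"
    using mono[OF x'(2)] mono x'(1) s H by (simp_all add: poincare_lift_def)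
  ultimately show ?thesis
    unfolding lift using dist_cis_ge_min_endpoints[of "H x'" "H a" "H s" "H b"] by simp
qed

definition circle_arc :: "real \<Rightarrow> real \<Rightarrow> complex set" where
  "circle_arc a b = (\<lambda>s. cis (2 * pi * s)) ` {a..b}"

lemma circle_arc_in_CS1:
  assumes "a \<le> b"
  shows "circle_arc a b \<in> CS1"
proof -
  have cont: "continuous_on {a..b} (\<lambda>s. cis (2 * pi * s))"
    unfolding cis_conv_exp by (intro continuous_intros)
  have "compact (circle_arc a b)" "connected (circle_arc a b)"
    unfolding circle_arc_def using cont by (auto intro: compact_continuous_image connected_continuous_image)
  then show ?thesis
    using assms by (auto simp: CS1_def S1_def circle_arc_def compact_imp_closed)
qed

lemma lift_image_circle_arc_subset:
  assumes "poincare_lift h H"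
  shows "h ` circle_arc a b \<subseteq> S1"
  using assms by (auto simp: poincare_lift_def circle_arc_def S1_def)

section \<open>Hausdorff distance\<close>

lemma hausdorff_dist_commute: "hausdorff_dist A B = hausdorff_dist B A"
  unfolding hausdorff_dist_def by (simp add: conj_commute)

lemma hausdorff_dist_self: "hausdorff_dist A A = 0"
proof -
  have "{e. e > 0 \<and> A \<subseteq> nbhd A e \<and> A \<subseteq> nbhd A e} = {0<..}"
    by (auto simp: nbhd_def)
  then show ?thesis
    by (simp add: hausdorff_dist_def)
qed

lemma hausdorff_dist_le:
  assumes "\<And>x. x \<in> A \<Longrightarrow> infdist x B < e" "\<And>y. y \<in> B \<Longrightarrow> infdist y A < e" "0 < e"
  shows "hausdorff_dist A B \<le> e"
  unfolding hausdorff_dist_def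
  by (rule cInf_lower) (use assms in \<open>auto simp: nbhd_def bdd_below_def intro!: exI[of _ 0]\<close>)

lemma hausdorff_dist_le_of_net:
  assumes net: "S \<subseteq> (\<Union>q\<in>N. ball q \<delta>)" and "A \<subseteq> S" "A' \<subseteq> S" "0 < \<delta>"
    and same: "{q\<in>N. infdist q A < \<delta>} = {q\<in>N. infdist q A' < \<delta>}"
  shows "hausdorff_dist A A' \<le> 2 * \<delta>"
proof -
  have key: "infdist b C' < 2 * \<delta>"
    if C: "b \<in> C" "C \<subseteq> S" "{q\<in>N. infdist q C < \<delta>} = {q\<in>N. infdist q C' < \<delta>}" for b C C'
  proof -
    have "b \<in> S"
      using C(1,2) by blast
    then obtain q where q: "q \<in> N" "dist q b < \<delta>"
      using net by auto
    have "infdist q C < \<delta>"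
      using infdist_le[OF C(1), of q] q(2) by simp
    then have "q \<in> {q\<in>N. infdist q C' < \<delta>}"
      using q(1) C(3)[symmetric] by simp
    then have "infdist q C' < \<delta>"
      by simp
    then show ?thesis
      using infdist_triangle[of b C' q] q(2) by (simp add: dist_commute)
  qed
  show ?thesis
  proof (rule hausdorff_dist_le)
    show "infdist b A' < 2 * \<delta>" if "b \<in> A" for b
      using key[OF that \<open>A \<subseteq> S\<close> same] .
    show "infdist b A < 2 * \<delta>" if "b \<in> A'" for b
      using key[OF that \<open>A' \<subseteq> S\<close> same[symmetric]] .
  qed (simp add: \<open>0 < \<delta>\<close>)
qed

lemma hausdorff_dist_ge:
  assumes "bounded (A \<union> B)" "x \<in> A" "B \<noteq> {}" "\<And>y. y \<in> B \<Longrightarrow> r \<le> dist x y"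
  shows "r \<le> hausdorff_dist A B"
  unfolding hausdorff_dist_def
proof (rule cInf_greatest)
  have "infdist u V < diameter (A \<union> B) + 1" if "u \<in> A \<union> B" "V \<subseteq> A \<union> B" "V \<noteq> {}" for u V
  proof -
    obtain v where "v \<in> V" using \<open>V \<noteq> {}\<close> by blast
    then have "infdist u V \<le> dist u v" by (rule infdist_le)
    also have "\<dots> \<le> diameter (A \<union> B)"
      using \<open>v \<in> V\<close> that assms(1) by (auto intro: diameter_bounded_bound)
    finally show ?thesis by simp
  qed
  then have "A \<subseteq> nbhd B (diameter (A \<union> B) + 1)" "B \<subseteq> nbhd A (diameter (A \<union> B) + 1)"
    using assms(2,3) unfolding nbhd_def by blast+
  moreover have "0 < diameter (A \<union> B) + 1"
    using diameter_ge_0[OF assms(1)] by simp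
  ultimately show "{e. e > 0 \<and> A \<subseteq> nbhd B e \<and> B \<subseteq> nbhd A e} \<noteq> {}"
    by blast
next
  fix e assume "e \<in> {e. e > 0 \<and> A \<subseteq> nbhd B e \<and> B \<subseteq> nbhd A e}"
  then have "infdist x B < e"
    using assms(2) unfolding nbhd_def by auto
  moreover have "r \<le> infdist x B"
    using assms(3,4) by (simp add: infdist_notempty cINF_greatest)
  ultimately show "r \<le> e" by simp
qed

lemma hausdorff_dist_lift_image_arcs_ge:
  assumes H: "poincare_lift h H"
    and x: "x \<in> {a..b}" "x \<notin> {a'..b'}" "{x, a', b'} \<subseteq> {0..<1}"
    and far: "r \<le> dist (h (cis (2 * pi * x))) (h (cis (2 * pi * a')))"
      "r \<le> dist (h (cis (2 * pi * x))) (h (cis (2 * pi * b')))"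
    and "a' \<le> b'"
  shows "r \<le> hausdorff_dist (h ` circle_arc a b) (h ` circle_arc a' b')"
proof (rule hausdorff_dist_ge)
  show "bounded (h ` circle_arc a b \<union> h ` circle_arc a' b')"
    using lift_image_circle_arc_subset[OF H] unfolding S1_def
    by (meson bounded_subset bounded_sphere le_sup_iff)
  show "h (cis (2 * pi * x)) \<in> h ` circle_arc a b"
    using x(1) by (auto simp: circle_arc_def)
  show "h ` circle_arc a' b' \<noteq> {}"
    using \<open>a' \<le> b'\<close> by (auto simp: circle_arc_def)
  fix y assume "y \<in> h ` circle_arc a' b'"
  then obtain s where "s \<in> {a'..b'}" "y = h (cis (2 * pi * s))"
    by (auto simp: circle_arc_def)
  then show "r \<le> dist (h (cis (2 * pi * x))) y"
    using dist_lift_image_arc_ge[OF H, of a' s b' x] x far by auto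
qed

section \<open>Separated sets and polynomial entropy\<close>

lemma Cmap_funpow: "(Cmap f ^^ k) A = (f ^^ k) ` A"
  by (induction k) (auto simp: Cmap_def image_comp)

lemma dyn_dist_ge:
  assumes "k < n"
  shows "\<rho> ((g ^^ k) x) ((g ^^ k) y) \<le> dyn_dist \<rho> g n x y"
  unfolding dyn_dist_def using assms by (intro Max_ge) auto

lemma dyn_dist_commute:
  assumes "\<And>u v. \<rho> u v = \<rho> v u"
  shows "dyn_dist \<rho> g n x y = dyn_dist \<rho> g n y x"
  unfolding dyn_dist_def by (simp add: assms)

lemma dyn_dist_self:
  assumes "\<And>u. \<rho> u u = 0"
  shows "dyn_dist \<rho> g n x x = 0"
  unfolding dyn_dist_def by (simp add: assms image_constant_conv)

lemma separated_set_image: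
  assumes "finite I" "\<phi> ` I \<subseteq> Z" "0 < e" "\<And>u. \<rho> u u = 0"
    and sep: "\<And>i j. i \<in> I \<Longrightarrow> j \<in> I \<Longrightarrow> i \<noteq> j \<Longrightarrow> e \<le> dyn_dist \<rho> g n (\<phi> i) (\<phi> j)"
  shows "separated_set Z \<rho> g n e (\<phi> ` I)" "card (\<phi> ` I) = card I"
proof -
  show "card (\<phi> ` I) = card I"
  proof (rule card_image, rule inj_onI, rule ccontr)
    fix i j assume "i \<in> I" "j \<in> I" "\<phi> i = \<phi> j" "i \<noteq> j"
    then show False
      using sep[of i j] dyn_dist_self[of \<rho>] assms(3,4) by simp
  qed
  show "separated_set Z \<rho> g n e (\<phi> ` I)"
    unfolding separated_set_def using assms by (auto intro: sep)
qed

text \<open>\<open>sep_num\<close> is a supremum of natural numbers, so it is only meaningful when the cardinalities of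
  separated sets are bounded; hence the \<open>bdd_above\<close> hypotheses below.\<close>
lemma card_le_sep_num:
  assumes "bdd_above (card ` {E. separated_set Z \<rho> g n e E})" "separated_set Z \<rho> g n e E"
  shows "card E \<le> sep_num Z \<rho> g n e"
  unfolding sep_num_def using assms by (intro cSup_upper) auto

lemma sep_num_antimono:
  assumes "bdd_above (card ` {E. separated_set Z \<rho> g n e' E})" "e' \<le> e"
  shows "sep_num Z \<rho> g n e \<le> sep_num Z \<rho> g n e'"
  unfolding sep_num_def
proof (rule cSup_subset_mono)
  show "card ` {E. separated_set Z \<rho> g n e E} \<noteq> {}"
    using separated_set_def[of Z \<rho> g n e "{}"] by auto
  show "card ` {E. separated_set Z \<rho> g n e E} \<subseteq> card ` {E. separated_set Z \<rho> g n e' E}"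
    using assms(2) unfolding separated_set_def by (intro image_mono) (auto intro: order_trans)
qed (rule assms(1))

text \<open>Sets that stay \<open>e\<close>-separated under \<open>Cmap f\<close> up to time \<open>n\<close> are told apart by which points of a
  finite \<open>e/3\<close>-net their first \<open>n\<close> images come near, so there are boundedly many of them.\<close>
lemma bdd_above_card_separated_Cmap:
  fixes f :: "complex \<Rightarrow> complex"
  assumes "compact S" "f ` S \<subseteq> S" "Z \<subseteq> Pow S" "0 < e"
  shows "bdd_above (card ` {E. separated_set Z hausdorff_dist (Cmap f) n e E})"
proof -
  define \<delta> where "\<delta> = e / 3"
  have "0 < \<delta>" using assms(4) by (simp add: \<delta>_def)
  obtain N where N: "N \<subseteq> S" "finite N" "S \<subseteq> (\<Union>q\<in>N. ball q \<delta>)"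
    by (rule compactE_image[OF assms(1), of S "\<lambda>q. ball q \<delta>"]) (use \<open>0 < \<delta>\<close> in auto)
  have fkS: "(f ^^ k) ` A \<subseteq> S" if "A \<subseteq> S" for k A
    using that by (induction k) (use assms(2) in auto)
  define code where "code A = (\<lambda>k\<in>{..<n}. {q\<in>N. infdist q ((f ^^ k) ` A) < \<delta>})" for A
  have "card E \<le> card (PiE {..<n} (\<lambda>_. Pow N))" if sep: "separated_set Z hausdorff_dist (Cmap f) n e E" for E
  proof (rule card_inj_on_le)
    show "inj_on code E"
    proof (rule inj_onI, rule ccontr)
      fix A A' assume A: "A \<in> E" "A' \<in> E" "code A = code A'" "A \<noteq> A'"
      then have "A \<subseteq> S" "A' \<subseteq> S"
        using sep assms(3) unfolding separated_set_def by auto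
      have "hausdorff_dist ((f ^^ k) ` A) ((f ^^ k) ` A') < e" if "k < n" for k
      proof -
        have "{q\<in>N. infdist q ((f ^^ k) ` A) < \<delta>} = {q\<in>N. infdist q ((f ^^ k) ` A') < \<delta>}"
          using fun_cong[OF A(3), of k] that unfolding code_def by simp
        then have "hausdorff_dist ((f ^^ k) ` A) ((f ^^ k) ` A') \<le> 2 * \<delta>"
          by (rule hausdorff_dist_le_of_net[OF N(3) fkS[OF \<open>A \<subseteq> S\<close>] fkS[OF \<open>A' \<subseteq> S\<close>] \<open>0 < \<delta>\<close>])
        then show ?thesis
          using assms(4) by (simp add: \<delta>_def)
      qed
      then have "dyn_dist hausdorff_dist (Cmap f) n A A' < e"
        using assms(4) unfolding dyn_dist_def by (simp add: Cmap_funpow Max_less_iff)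
      then show False
        using A sep unfolding separated_set_def by fastforce
    qed
  qed (auto simp: code_def N(2) finite_PiE)
  then show ?thesis
    by (intro bdd_aboveI) auto
qed

lemma bdd_above_card_separated_CS1:
  assumes "f ` S1 \<subseteq> S1" "0 < e"
  shows "bdd_above (card ` {E. separated_set CS1 hausdorff_dist (Cmap f) n e E})"
  by (rule bdd_above_card_separated_Cmap[of S1]) (use assms in \<open>auto simp: S1_def CS1_def\<close>)

lemma Lim_at_right_0_ge_of_antimono:
  fixes \<phi> :: "real \<Rightarrow> ereal"
  assumes antimono: "\<And>e e'. 0 < e' \<Longrightarrow> e' \<le> e \<Longrightarrow> \<phi> e \<le> \<phi> e'" and "0 < e0"
  shows "\<phi> e0 \<le> Lim (at_right 0) \<phi>"
proof -
  have "(\<phi> \<longlongrightarrow> (SUP e\<in>{0<..}. \<phi> e)) (at_right 0)"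
  proof (rule increasing_tendsto)
    show "eventually (\<lambda>e. \<phi> e \<le> (SUP e\<in>{0<..}. \<phi> e)) (at_right 0)"
      using eventually_at_right_less[of 0] by eventually_elim (auto intro: SUP_upper)
    fix a assume "a < (SUP e\<in>{0<..}. \<phi> e)"
    then obtain e1 where "0 < e1" "a < \<phi> e1"
      by (auto simp: less_SUP_iff)
    then show "eventually (\<lambda>e. a < \<phi> e) (at_right 0)"
      unfolding eventually_at_right_field using antimono
      by (auto intro!: exI[of _ e1] elim: less_le_trans)
  qed
  then have "Lim (at_right 0) \<phi> = (SUP e\<in>{0<..}. \<phi> e)"
    by (intro tendsto_Lim) simp_all
  then show ?thesis
    using \<open>0 < e0\<close> by (auto intro: SUP_upper)
qed

lemma ln_of_nat_mono: "m \<le> n \<Longrightarrow> ln (real m) \<le> ln (real n)"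
  by (cases "m = 0"; cases "n = 0") (auto intro!: ln_ge_zero)

lemma limsup_ln_over_ln_ge_of_power_bound:
  fixes s :: "nat \<Rightarrow> real"
  assumes "0 < c" and lower: "eventually (\<lambda>n. c * real n ^ d \<le> s n) sequentially"
  shows "ereal (real d) \<le> limsup (\<lambda>n. ereal (ln (s n) / ln (real n)))"
proof -
  have "(\<lambda>n. ln (c * real n ^ d) / ln (real n)) \<longlonglongrightarrow> real d"
    using \<open>0 < c\<close> by real_asymp
  then have "limsup (\<lambda>n. ereal (ln (c * real n ^ d) / ln (real n))) = real d"
    by (intro lim_imp_Limsup) (auto intro: tendsto_ereal)
  moreover have "eventually (\<lambda>n. ereal (ln (c * real n ^ d) / ln (real n))
      \<le> ereal (ln (s n) / ln (real n))) sequentially"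
    using lower eventually_ge_at_top[of 1]
  proof eventually_elim
    case (elim n)
    have "0 < c * real n ^ d"
      using elim(2) \<open>0 < c\<close> by simp
    then have "ln (c * real n ^ d) \<le> ln (s n)"
      using elim(1) by (subst ln_le_cancel_iff) auto
    moreover have "0 \<le> ln (real n)"
      using elim(2) by simp
    ultimately show ?case
      by (simp add: divide_right_mono)
  qed
  then have "limsup (\<lambda>n. ereal (ln (c * real n ^ d) / ln (real n)))
      \<le> limsup (\<lambda>n. ereal (ln (s n) / ln (real n)))"
    by (rule Limsup_mono)
  ultimately show ?thesis
    by simp
qed

lemma h_pol_ge_of_sep_num_ge_power:
  assumes bdd: "\<And>n e. 0 < e \<Longrightarrow> bdd_above (card ` {E. separated_set Z \<rho> g n e E})"
    and "0 < \<epsilon>" "0 < c"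
    and lower: "eventually (\<lambda>n. c * real n ^ d \<le> real (sep_num Z \<rho> g n \<epsilon>)) sequentially"
  shows "ereal (real d) \<le> h_pol Z \<rho> g"
proof -
  define \<phi> where "\<phi> e = limsup (\<lambda>n. ereal (ln (real (sep_num Z \<rho> g n e)) / ln (real n)))" for e
  have "\<phi> e \<le> \<phi> e'" if "0 < e'" "e' \<le> e" for e e'
    unfolding \<phi>_def
  proof (intro Limsup_mono always_eventually allI)
    fix n :: nat
    have "sep_num Z \<rho> g n e \<le> sep_num Z \<rho> g n e'"
      using sep_num_antimono[OF bdd] that by blast
    then have "ln (real (sep_num Z \<rho> g n e)) \<le> ln (real (sep_num Z \<rho> g n e'))"
      by (rule ln_of_nat_mono)
    then show "ereal (ln (real (sep_num Z \<rho> g n e)) / ln (real n))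
        \<le> ereal (ln (real (sep_num Z \<rho> g n e')) / ln (real n))"
      by (cases "n = 0") (auto intro: divide_right_mono)
  qed
  then have "\<phi> \<epsilon> \<le> h_pol Z \<rho> g"
    unfolding h_pol_def \<phi>_def[symmetric] using Lim_at_right_0_ge_of_antimono \<open>0 < \<epsilon>\<close> by blast
  moreover have "ereal (real d) \<le> \<phi> \<epsilon>"
    unfolding \<phi>_def by (rule limsup_ln_over_ln_ge_of_power_bound[OF \<open>0 < c\<close> lower])
  ultimately show ?thesis
    by simp
qed

section \<open>Wandering points\<close>

lemma cantor_set_notin_middle_third:
  assumes "x \<in> cantor_set"
  shows "x \<le> 1/3 \<or> 2/3 \<le> x"
proof -
  obtain d :: "nat \<Rightarrow> nat" where d: "\<And>n. d n \<in> {0, 2}" and x: "x = (\<Sum>n. real (d n) / 3 ^ Suc n)"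
    using assms unfolding cantor_set_def by blast
  have g: "(\<lambda>n. 2/9 * (1/3::real)^n) sums (1/3)"
    using sums_mult[OF geometric_sums[of "1/3::real"], of "2/9"] by simp
  have le: "real (d (Suc n)) / 3 ^ Suc (Suc n) \<le> 2/9 * (1/3::real)^n" for n
  proof -
    have "real (d (Suc n)) \<le> 2" using d[of "Suc n"] by auto
    then have "real (d (Suc n)) / 3 ^ Suc (Suc n) \<le> 2 / 3 ^ Suc (Suc n)"
      by (simp add: divide_right_mono)
    also have "\<dots> = 2/9 * (1/3::real)^n"
      by (simp add: power_divide)
    finally show ?thesis .
  qed
  have sm: "summable (\<lambda>n. real (d (Suc n)) / 3 ^ Suc (Suc n))"
    by (rule summable_comparison_test[of _ "\<lambda>n. 2/9 * (1/3::real)^n"]) (use le g in \<open>auto simp: sums_iff\<close>)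
  have tail: "0 \<le> (\<Sum>n. real (d (Suc n)) / 3 ^ Suc (Suc n))" "(\<Sum>n. real (d (Suc n)) / 3 ^ Suc (Suc n)) \<le> 1/3"
    using suminf_nonneg[OF sm] suminf_le[OF le sm] g by (auto simp: sums_iff)
  have "summable (\<lambda>n. real (d n) / 3 ^ Suc n)"
    using sm by (subst summable_Suc_iff[symmetric]) simp
  then have "(\<Sum>n. real (d (Suc n)) / 3 ^ Suc (Suc n)) = x - real (d 0) / 3"
    using suminf_split_head x by fastforce
  then show ?thesis
    using d[of 0] tail by auto
qed

lemma cantor_set_not_connected: "\<not> connected cantor_set"
proof
  assume "connected cantor_set"
  have "0 \<in> cantor_set"
    unfolding cantor_set_def by (intro CollectI exI[of _ "\<lambda>_. 0"]) simp
  moreover have "1 \<in> cantor_set"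
  proof -
    have "(\<lambda>n. 2/3 * (1/3::real)^n) sums 1"
      using sums_mult[OF geometric_sums[of "1/3::real"], of "2/3"] by simp
    then have "(\<Sum>n. real ((\<lambda>_. 2::nat) n) / 3 ^ Suc n) = 1"
      by (simp add: sums_iff power_divide)
    then show ?thesis
      unfolding cantor_set_def by (intro CollectI exI[of _ "\<lambda>_. 2::nat"]) simp
  qed
  moreover have "is_interval cantor_set"
    using \<open>connected cantor_set\<close> is_interval_connected_1 by blast
  ultimately have "1/2 \<in> cantor_set"
    using is_interval_1[THEN iffD1, rule_format, of cantor_set 0 1 "1/2"] by simp
  then show False
    using cantor_set_notin_middle_third by force
qed

lemma nonwandering_subset: "nonwandering S f \<subseteq> S"
  unfolding nonwandering_def by auto

lemma wandering_point_exists: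
  assumes "nonwandering S1 f homeomorphic cantor_set"
  obtains p where "p \<in> S1" "p \<notin> nonwandering S1 f"
proof -
  have "connected S1"
    unfolding S1_def by (simp add: connected_sphere)
  moreover have "\<not> connected (nonwandering S1 f)"
    using assms cantor_set_not_connected homeomorphic_connectedness by blast
  ultimately have "nonwandering S1 f \<noteq> S1"
    by auto
  then show thesis
    using nonwandering_subset that by blast
qed

lemma homeomorphism_funpow:
  assumes "homeomorphism S S f g"
  shows "homeomorphism S S (f ^^ n) (g ^^ n)"
proof (induction n)
  case 0
  show ?case using homeomorphism_ident by (simp add: id_def)
next
  case (Suc n)
  have "homeomorphism S S (f ^^ n \<circ> f) (g \<circ> g ^^ n)"
    by (rule homeomorphism_compose[OF assms Suc])
  then show ?case
    by (simp only: funpow_Suc_right[symmetric] funpow.simps(2)[symmetric])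
qed

lemma homeomorphism_funpow_inverse_apply:
  assumes hom: "homeomorphism S S f g" and "p \<in> S"
  shows "i \<le> l \<Longrightarrow> (f ^^ l) ((g ^^ i) p) = (f ^^ (l - i)) p"
    and "l \<le> i \<Longrightarrow> (f ^^ l) ((g ^^ i) p) = (g ^^ (i - l)) p"
proof -
  have inv: "(f ^^ k) ((g ^^ k) q) = q" if "q \<in> S" for k q
    using homeomorphism_apply2[OF homeomorphism_funpow[OF hom] that] .
  show "(f ^^ l) ((g ^^ i) p) = (f ^^ (l - i)) p" if "i \<le> l"
  proof -
    have "f ^^ l = f ^^ (l - i) \<circ> f ^^ i"
      using that by (simp flip: funpow_add)
    then show ?thesis
      using inv[OF \<open>p \<in> S\<close>] by simp
  qed
  show "(f ^^ l) ((g ^^ i) p) = (g ^^ (i - l)) p" if "l \<le> i"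
  proof -
    have "g ^^ i = g ^^ l \<circ> g ^^ (i - l)"
      using that by (simp flip: funpow_add)
    moreover have "(g ^^ (i - l)) p \<in> S"
      using homeomorphism_image2[OF homeomorphism_funpow[OF hom]] \<open>p \<in> S\<close> by (metis imageI)
    ultimately show ?thesis
      using inv by simp
  qed
qed

lemma funpow_backward_orbit_notin_wandering:
  assumes hom: "homeomorphism S S f g" and p: "p \<in> S" "p \<in> U"
    and disjoint: "\<And>n. 1 \<le> n \<Longrightarrow> (f ^^ n) ` U \<inter> U = {}"
    and "i \<noteq> l"
  shows "(f ^^ l) ((g ^^ i) p) \<notin> U"
proof (cases "i < l")
  case True
  then have "(f ^^ l) ((g ^^ i) p) \<in> (f ^^ (l - i)) ` U"
    using homeomorphism_funpow_inverse_apply(1)[OF hom p(1)] p(2) by (simp add: imageI)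
  moreover have "(f ^^ (l - i)) ` U \<inter> U = {}"
    using disjoint True by simp
  ultimately show ?thesis
    by blast
next
  case False
  then have "l < i"
    using \<open>i \<noteq> l\<close> by simp
  define w where "w = (g ^^ (i - l)) p"
  have "(f ^^ (i - l)) w = p"
    unfolding w_def using homeomorphism_funpow_inverse_apply(1)[OF hom p(1), of "i - l" "i - l"] by simp
  moreover have "(f ^^ (i - l)) ` U \<inter> U = {}"
    using disjoint \<open>l < i\<close> by simp
  ultimately have "w \<notin> U"
    using p(2) by (metis IntI emptyE imageI)
  then show ?thesis
    using homeomorphism_funpow_inverse_apply(2)[OF hom p(1)] \<open>l < i\<close> unfolding w_def by simp
qed

lemma wandering_backward_orbit_far:
  fixes f g :: "'a::metric_space \<Rightarrow> 'a"
  assumes hom: "homeomorphism S S f g" and p: "p \<in> S" "p \<notin> nonwandering S f"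
  obtains r where "0 < r" "\<And>i l. i \<noteq> l \<Longrightarrow> r \<le> dist p ((f ^^ l) ((g ^^ i) p))"
proof -
  obtain U where U: "openin (top_of_set S) U" "p \<in> U"
    and disjoint: "\<And>n. 1 \<le> n \<Longrightarrow> (f ^^ n) ` U \<inter> U = {}"
    using p unfolding nonwandering_def by auto
  obtain r where r: "0 < r" "ball p r \<inter> S \<subseteq> U"
    using U openin_contains_ball by meson
  have "r \<le> dist p ((f ^^ l) ((g ^^ i) p))" if "i \<noteq> l" for i l
  proof (rule ccontr)
    have "(g ^^ i) p \<in> S" "(f ^^ l) ((g ^^ i) p) \<in> S"
      using homeomorphism_image1[OF homeomorphism_funpow[OF hom]]
        homeomorphism_image2[OF homeomorphism_funpow[OF hom]] p(1) by (metis imageI)+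
    moreover assume "\<not> r \<le> dist p ((f ^^ l) ((g ^^ i) p))"
    ultimately have "(f ^^ l) ((g ^^ i) p) \<in> ball p r \<inter> S"
      by simp
    then show False
      using r(2) funpow_backward_orbit_notin_wandering[OF hom p(1) U(2) disjoint that] by blast
  qed
  with r(1) show thesis
    by (rule that)
qed

text \<open>Here \<open>t l\<close> parametrises the point \<open>g\<^sup>l p\<close> of the backward orbit.\<close>
lemma wandering_point_lift_parameters:
  assumes hom: "homeomorphism S1 S1 f g" and p: "p \<in> S1" "p \<notin> nonwandering S1 f"
  obtains r t where "0 < r" "\<And>l. t l \<in> {0..<1}"
    "\<And>l. (f ^^ l) (cis (2 * pi * t l)) = p"
    "\<And>i l. i \<noteq> l \<Longrightarrow> r \<le> dist p ((f ^^ l) (cis (2 * pi * t i)))"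
proof -
  obtain r where r: "0 < r" "\<And>i l. i \<noteq> l \<Longrightarrow> r \<le> dist p ((f ^^ l) ((g ^^ i) p))"
    using wandering_backward_orbit_far[OF hom p] by blast
  have "(g ^^ l) p \<in> S1" for l
    using homeomorphism_image2[OF homeomorphism_funpow[OF hom]] p(1) by (metis imageI)
  then have "\<forall>l. \<exists>s. s \<in> {0..<1} \<and> (g ^^ l) p = cis (2 * pi * s)"
    using S1_cis_param by metis
  then obtain t where t: "\<And>l. t l \<in> {0..<1}" "\<And>l. (g ^^ l) p = cis (2 * pi * t l)"
    by metis
  have "(f ^^ l) (cis (2 * pi * t l)) = p" for l
    using homeomorphism_apply2[OF homeomorphism_funpow[OF hom] p(1)] t(2) by metis
  moreover have "r \<le> dist p ((f ^^ l) (cis (2 * pi * t i)))" if "i \<noteq> l" for i l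
    using r(2)[OF that] t(2) by metis
  ultimately show thesis
    using that r(1) t(1) by blast
qed

section \<open>Separated arcs\<close>

lemma card_2_Min_Max:
  fixes C :: "'a::linorder set"
  assumes "card C = 2"
  shows "C = {Min C, Max C}" "Min C < Max C" "Min C \<in> C" "Max C \<in> C"
proof -
  obtain x y where C: "C = {x, y}" "x \<noteq> y"
    using assms by (auto simp: card_2_iff)
  then have "Min C = min x y" "Max C = max x y"
    by simp_all
  then show pair: "C = {Min C, Max C}" "Min C < Max C"
    using C by (auto simp: min_def max_def)
  show "Min C \<in> C" "Max C \<in> C"
    using pair(1) by (metis insertI1 insert_commute)+
qed

lemma two_point_sets_separated_by_endpoint:
  fixes B B' :: "real set"
  assumes "card B = 2" "card B' = 2" "B \<noteq> B'"
  obtains x where "x \<in> B \<union> B'" "x \<in> {Min B..Max B} \<longleftrightarrow> x \<notin> {Min B'..Max B'}"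
proof -
  have mem: "x \<in> {Min C..Max C}" if "x \<in> C" "card C = 2" for x and C :: "real set"
  proof -
    have "finite C"
      using that(2) by (metis card.infinite zero_neq_numeral)
    then show ?thesis
      using that(1) by simp
  qed
  have "\<exists>x \<in> B \<union> B'. \<not> (x \<in> {Min B..Max B} \<longleftrightarrow> x \<in> {Min B'..Max B'})"
  proof (rule ccontr)
    assume "\<not> ?thesis"
    then have both: "x \<in> {Min B..Max B} \<and> x \<in> {Min B'..Max B'}" if "x \<in> B \<union> B'" for x
      using that mem assms(1,2) by blast
    have "Min B \<in> {Min B'..Max B'}" "Max B \<in> {Min B'..Max B'}"
      "Min B' \<in> {Min B..Max B}" "Max B' \<in> {Min B..Max B}"
      using both card_2_Min_Max(3,4) assms(1,2) by blast+
    then have "Min B = Min B'" "Max B = Max B'"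
      by auto
    then show False
      using card_2_Min_Max(1) assms by metis
  qed
  then show thesis
    using that by blast
qed

text \<open>At the time \<open>l\<close> at which \<open>t l\<close> is sent to \<open>p\<close>, the image of an arc containing \<open>t l\<close> contains \<open>p\<close>,
  while the image of an arc avoiding \<open>t l\<close> with endpoints among the \<open>t i\<close> stays \<open>r\<close>-far from \<open>p\<close>.\<close>
lemma dyn_dist_Cmap_circle_arcs_ge:
  assumes F: "poincare_lift f F"
    and t: "\<And>l. t l \<in> {0..<1}"
    and hit: "\<And>l. (f ^^ l) (cis (2 * pi * t l)) = p"
    and miss: "\<And>i l. i \<noteq> l \<Longrightarrow> r \<le> dist p ((f ^^ l) (cis (2 * pi * t i)))"
    and l: "l < n" "t l \<in> {a..b}" "t l \<notin> {a'..b'}"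
    and ends: "a' \<le> b'" "a' \<in> range t" "b' \<in> range t"
  shows "r \<le> dyn_dist hausdorff_dist (Cmap f) n (circle_arc a b) (circle_arc a' b')"
proof -
  have "r \<le> dist p ((f ^^ l) (cis (2 * pi * y)))" if "y \<in> range t" "y \<noteq> t l" for y
    using that by (auto intro!: miss)
  then have "r \<le> dist ((f ^^ l) (cis (2 * pi * t l))) ((f ^^ l) (cis (2 * pi * a')))"
    "r \<le> dist ((f ^^ l) (cis (2 * pi * t l))) ((f ^^ l) (cis (2 * pi * b')))"
    using ends l(3) hit by auto
  moreover have "{t l, a', b'} \<subseteq> {0..<1}"
    using ends t by auto
  ultimately have "r \<le> hausdorff_dist ((f ^^ l) ` circle_arc a b) ((f ^^ l) ` circle_arc a' b')"
    using hausdorff_dist_lift_image_arcs_ge[OF poincare_lift_funpow[OF F] l(2,3)] ends(1) by blast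
  then show ?thesis
    using dyn_dist_ge[OF l(1), of hausdorff_dist "Cmap f" "circle_arc a b" "circle_arc a' b'"]
    by (simp add: Cmap_funpow)
qed

lemma dyn_dist_Cmap_two_point_arcs_ge:
  assumes F: "poincare_lift f F"
    and t: "\<And>l. t l \<in> {0..<1}"
    and hit: "\<And>l. (f ^^ l) (cis (2 * pi * t l)) = p"
    and miss: "\<And>i l. i \<noteq> l \<Longrightarrow> r \<le> dist p ((f ^^ l) (cis (2 * pi * t i)))"
    and B: "B \<subseteq> t ` {..<n}" "card B = 2" and B': "B' \<subseteq> t ` {..<n}" "card B' = 2" and "B \<noteq> B'"
  shows "r \<le> dyn_dist hausdorff_dist (Cmap f) n (circle_arc (Min B) (Max B)) (circle_arc (Min B') (Max B'))"
proof -
  have far: "r \<le> dyn_dist hausdorff_dist (Cmap f) n (circle_arc (Min C) (Max C)) (circle_arc (Min C') (Max C'))"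
    if C: "C \<subseteq> t ` {..<n}" "C' \<subseteq> t ` {..<n}" "card C' = 2"
      and x: "x \<in> C \<union> C'" "x \<in> {Min C..Max C}" "x \<notin> {Min C'..Max C'}" for C C' x
  proof -
    obtain l where l: "l < n" "x = t l"
      using C(1,2) x(1) by blast
    have "Min C' \<in> range t" "Max C' \<in> range t"
      using card_2_Min_Max(3,4)[OF C(3)] C(2) by auto
    moreover have "Min C' \<le> Max C'"
      using card_2_Min_Max(2)[OF C(3)] by simp
    ultimately show ?thesis
      using dyn_dist_Cmap_circle_arcs_ge[OF F t hit miss l(1)] x(2,3) l(2) by simp
  qed
  obtain x where x: "x \<in> B \<union> B'" "x \<in> {Min B..Max B} \<longleftrightarrow> x \<notin> {Min B'..Max B'}"
    using two_point_sets_separated_by_endpoint[OF B(2) B'(2) \<open>B \<noteq> B'\<close>] by blast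
  show ?thesis
  proof (cases "x \<in> {Min B..Max B}")
    case True
    then show ?thesis
      using far[OF B(1) B'(1,2)] x by blast
  next
    case False
    then have "r \<le> dyn_dist hausdorff_dist (Cmap f) n (circle_arc (Min B') (Max B')) (circle_arc (Min B) (Max B))"
      using far[OF B'(1) B(1,2)] x by blast
    then show ?thesis
      by (simp add: dyn_dist_commute hausdorff_dist_commute)
  qed
qed

lemma sep_num_Cmap_ge_choose_two:
  fixes f :: "complex \<Rightarrow> complex" and t :: "nat \<Rightarrow> real"
  assumes F: "poincare_lift f F" and "f ` S1 \<subseteq> S1" and "0 < r"
    and t: "\<And>l. t l \<in> {0..<1}"
    and hit: "\<And>l. (f ^^ l) (cis (2 * pi * t l)) = p"
    and miss: "\<And>i l. i \<noteq> l \<Longrightarrow> r \<le> dist p ((f ^^ l) (cis (2 * pi * t i)))"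
  shows "n choose 2 \<le> sep_num CS1 hausdorff_dist (Cmap f) n r"
proof -
  have "inj t"
  proof (rule injI, rule ccontr)
    fix i l assume "t i = t l" "i \<noteq> l"
    then show False
      using miss[of i l] hit[of l] \<open>0 < r\<close> by simp
  qed
  define Bs where "Bs = {B. B \<subseteq> t ` {..<n} \<and> card B = 2}"
  define arc_of where "arc_of B = circle_arc (Min B) (Max B)" for B
  have card_Bs: "card Bs = n choose 2"
    unfolding Bs_def using n_subsets[of "t ` {..<n}" 2] card_image[OF inj_on_subset[OF \<open>inj t\<close>]]
    by simp
  have "finite Bs"
    unfolding Bs_def by simp
  have "arc_of ` Bs \<subseteq> CS1"
  proof (rule image_subsetI)
    fix B assume "B \<in> Bs"
    then have "Min B \<le> Max B"
      using card_2_Min_Max(2)[of B] unfolding Bs_def by simp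
    then show "arc_of B \<in> CS1"
      unfolding arc_of_def by (rule circle_arc_in_CS1)
  qed
  have arcs_far: "r \<le> dyn_dist hausdorff_dist (Cmap f) n (arc_of B) (arc_of B')"
    if "B \<in> Bs" "B' \<in> Bs" "B \<noteq> B'" for B B'
    using that unfolding Bs_def arc_of_def by (auto intro: dyn_dist_Cmap_two_point_arcs_ge[OF F t hit miss])
  note arcs =
    separated_set_image[OF \<open>finite Bs\<close> \<open>arc_of ` Bs \<subseteq> CS1\<close> \<open>0 < r\<close> hausdorff_dist_self arcs_far]
  have "bdd_above (card ` {E. separated_set CS1 hausdorff_dist (Cmap f) n r E})"
    using assms(2,3) by (rule bdd_above_card_separated_CS1)
  then show ?thesis
    using card_le_sep_num[OF _ arcs(1)] arcs(2) card_Bs by simp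
qed

lemma real_choose_two_ge:
  assumes "2 \<le> n"
  shows "real n ^ 2 / 4 \<le> real (n choose 2)"
proof -
  have "even (n * (n - 1))"
    by (cases "even n") auto
  then have "2 * (n choose 2) = n * (n - 1)"
    by (simp add: choose_two)
  then have "real (2 * (n choose 2)) = real (n * (n - 1))"
    by (rule arg_cong)
  then have "real (n choose 2) = real n * (real n - 1) / 2"
    using assms by (simp add: of_nat_diff)
  moreover have "2 * real n \<le> real n * real n"
    using assms by (intro mult_right_mono) auto
  ultimately show ?thesis
    by (simp add: power2_eq_square algebra_simps)
qed

theorem corollary1:
  fixes f g :: "complex \<Rightarrow> complex"
  assumes "homeomorphism S1 S1 f g"
    and "orientation_preserving f"
    and "rotation_number f \<notin> \<rat>"
    and "nonwandering S1 f homeomorphic cantor_set"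
  shows "h_pol CS1 hausdorff_dist (Cmap f) \<ge> 2"
proof -
  obtain F where F: "poincare_lift f F"
    using assms(2) orientation_preserving_def by blast
  have fS: "f ` S1 \<subseteq> S1"
    using assms(1) by (simp add: homeomorphism_def)
  obtain p where p: "p \<in> S1" "p \<notin> nonwandering S1 f"
    using wandering_point_exists[OF assms(4)] by blast
  obtain r t where r: "0 < r" and t: "\<And>l. t l \<in> {0..<1}"
    "\<And>l. (f ^^ l) (cis (2 * pi * t l)) = p"
    "\<And>i l. i \<noteq> l \<Longrightarrow> r \<le> dist p ((f ^^ l) (cis (2 * pi * t i)))"
    using wandering_point_lift_parameters[OF assms(1) p] by blast
  have "eventually (\<lambda>n. 1/4 * real n ^ 2 \<le> real (sep_num CS1 hausdorff_dist (Cmap f) n r)) sequentially"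
    using eventually_ge_at_top[of 2]
  proof eventually_elim
    case (elim n)
    have "n choose 2 \<le> sep_num CS1 hausdorff_dist (Cmap f) n r"
      by (rule sep_num_Cmap_ge_choose_two[OF F fS r t])
    then show ?case
      using real_choose_two_ge[OF elim] of_nat_le_iff[where 'a=real] by linarith
  qed
  then show ?thesis
    using h_pol_ge_of_sep_num_ge_power[OF bdd_above_card_separated_CS1[OF fS] r, where c="1/4" and d=2]
    by simp
qed

end
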